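(* Let $(H,G)$ be a finite Gelfand pair with notation as in the context, where index $i=1$ corresponds to the diagonal orbit $O_1$ and index $j=1$ to the trivial representation $T_1$. Then the matrix $C_{ij}=(\mathrm{X}_i,\Psi_j)$ satisfies $$\sum_i C_{ij}=\delta_{1j}|X|,\qquad \sum_j C_{ij}=\delta_{i1}|X| .$$
   Context: Let $G$ be a finite group, $H\le G$ a subgroup, $X=G/H$ with the left $G$-action, $x_0=H\in X$. $\mathbb{C}[X\times X]^G$ is the space of complex functions on $X\times X$ invariant under the diagonal $G$-action, with convolution $(f\times g)(x,z)=\sum_{y\in X}f(x,y)g(y,z)$ and Hermitian inner product $(a,b)=\sum_{x,y\in X}a(x,y)\overline{b(x,y)}$. $(H,G)$ is a Gelfand pair if $(\mathbb{C}[X\times X]^G,\times)$ is commutative; equivalently the permutation representation $\mathbb{C}[X]$, $(gf)(x)=f(g^{-1}x)$, decomposes as $\mathbb{C}[X]=\bigoplus_{j}T_j$ with $T_j$ pairwise non-isomorphic irreducible $G$-subrepresentations; $T_1$ denotes the constants. Each $T_j$ carries a $G$-invariant Hermitian inner product $\langle\cdot,\cdot\rangle$ (linear in the first variable) and contains an $H$-invariant vector $\theta_j$ with $\langle\theta_j,\theta_j\rangle=1$. The spherical function of $T_j$ is $\psi_j(g)=\frac{\dim T_j}{|X|}\langle T_j(g)\theta_j,\theta_j\rangle$; $\Psi_j(gH,g'H):=\psi_j(g^{-1}g')$. The $G$-orbits on $X\times X$ are $O_1,\dots,O_k$, with $O_1$ the diagonal, $\mathrm{X}_i$ is the characteristic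 function of $O_i$, and $o_i=\{x\in X:(x_0,x)\in O_i\}$. *)

theory Defs
  imports Complex_Main "HOL-Algebra.Left_Coset" "HOL-Library.Function_Algebras"
begin

definition cscale :: "complex \<Rightarrow> ('b \<Rightarrow> complex) \<Rightarrow> ('b \<Rightarrow> complex)" where
  "cscale c f = (\<lambda>x. c * f x)"

text \<open>C[X]: complex functions on the coset space X = G/H (zero outside X).\<close>
definition permsp :: "('a, 'b) monoid_scheme \<Rightarrow> 'a set \<Rightarrow> ('a set \<Rightarrow> complex) set" where
  "permsp G H = {f. \<forall>x. x \<notin> lcosets\<^bsub>G\<^esub> H \<longrightarrow> f x = 0}"

definition act :: "('a, 'b) monoid_scheme \<Rightarrow> 'a set \<Rightarrow> 'a \<Rightarrow> ('a set \<Rightarrow> complex) \<Rightarrow> ('a set \<Rightarrow> complex)" where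
  "act G H g f = (\<lambda>x. if x \<in> lcosets\<^bsub>G\<^esub> H then f ((inv\<^bsub>G\<^esub> g) <#\<^bsub>G\<^esub> x) else 0)"

definition subrep :: "('a, 'b) monoid_scheme \<Rightarrow> 'a set \<Rightarrow> ('a set \<Rightarrow> complex) set \<Rightarrow> bool" where
  "subrep G H W \<longleftrightarrow> module.subspace cscale W \<and> W \<subseteq> permsp G H \<and>
     (\<forall>g\<in>carrier G. \<forall>f\<in>W. act G H g f \<in> W)"

definition irred_subrep :: "('a, 'b) monoid_scheme \<Rightarrow> 'a set \<Rightarrow> ('a set \<Rightarrow> complex) set \<Rightarrow> bool" where
  "irred_subrep G H W \<longleftrightarrow> subrep G H W \<and> W \<noteq> {0} \<and>
     (\<forall>U. subrep G H U \<and> U \<subseteq> W \<longrightarrow> U = {0} \<or> U = W)"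

definition iso_subreps :: "('a, 'b) monoid_scheme \<Rightarrow> 'a set \<Rightarrow> ('a set \<Rightarrow> complex) set \<Rightarrow> ('a set \<Rightarrow> complex) set \<Rightarrow> bool" where
  "iso_subreps G H V W \<longleftrightarrow> (\<exists>\<phi>. Vector_Spaces.linear cscale cscale \<phi> \<and> bij_betw \<phi> V W \<and>
     (\<forall>g\<in>carrier G. \<forall>f\<in>V. \<phi> (act G H g f) = act G H g (\<phi> f)))"

definition direct_sum_decomp :: "('a, 'b) monoid_scheme \<Rightarrow> 'a set \<Rightarrow> nat \<Rightarrow> (nat \<Rightarrow> ('a set \<Rightarrow> complex) set) \<Rightarrow> bool" where
  "direct_sum_decomp G H m T \<longleftrightarrow> (\<forall>j\<in>{1..m}. T j \<subseteq> permsp G H) \<and>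
     (\<forall>f\<in>permsp G H. \<exists>!fs. fs \<in> (\<Pi>\<^sub>E j\<in>{1..m}. T j) \<and> f = (\<Sum>j\<in>{1..m}. fs j))"

definition constants :: "('a, 'b) monoid_scheme \<Rightarrow> 'a set \<Rightarrow> ('a set \<Rightarrow> complex) set" where
  "constants G H = {f \<in> permsp G H. \<exists>c. \<forall>x\<in>lcosets\<^bsub>G\<^esub> H. f x = c}"

definition ginv_inner :: "('a, 'b) monoid_scheme \<Rightarrow> 'a set \<Rightarrow> ('a set \<Rightarrow> complex) set \<Rightarrow>
    (('a set \<Rightarrow> complex) \<Rightarrow> ('a set \<Rightarrow> complex) \<Rightarrow> complex) \<Rightarrow> bool" where
  "ginv_inner G H W ip \<longleftrightarrow>
     (\<forall>u\<in>W. \<forall>v\<in>W. \<forall>w\<in>W. \<forall>a b. ip (cscale a u + cscale b v) w = a * ip u w + b * ip v w) \<and>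
     (\<forall>u\<in>W. \<forall>v\<in>W. ip v u = cnj (ip u v)) \<and>
     (\<forall>u\<in>W. u \<noteq> 0 \<longrightarrow> Im (ip u u) = 0 \<and> Re (ip u u) > 0) \<and>
     (\<forall>g\<in>carrier G. \<forall>u\<in>W. \<forall>v\<in>W. ip (act G H g u) (act G H g v) = ip u v)"

definition spherical :: "('a, 'b) monoid_scheme \<Rightarrow> 'a set \<Rightarrow> ('a set \<Rightarrow> complex) set \<Rightarrow>
    (('a set \<Rightarrow> complex) \<Rightarrow> ('a set \<Rightarrow> complex) \<Rightarrow> complex) \<Rightarrow> ('a set \<Rightarrow> complex) \<Rightarrow> 'a \<Rightarrow> complex" where
  "spherical G H W ip \<theta> g =
     of_nat (vector_space.dim cscale W) / of_nat (card (lcosets\<^bsub>G\<^esub> H)) * ip (act G H g \<theta>) \<theta>"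

definition rep :: "('a, 'b) monoid_scheme \<Rightarrow> 'a set \<Rightarrow> 'a set \<Rightarrow> 'a" where
  "rep G H x = (SOME g. g \<in> carrier G \<and> x = g <#\<^bsub>G\<^esub> H)"

definition Psi :: "('a, 'b) monoid_scheme \<Rightarrow> 'a set \<Rightarrow> ('a set \<Rightarrow> complex) set \<Rightarrow>
    (('a set \<Rightarrow> complex) \<Rightarrow> ('a set \<Rightarrow> complex) \<Rightarrow> complex) \<Rightarrow> ('a set \<Rightarrow> complex) \<Rightarrow> 'a set \<times> 'a set \<Rightarrow> complex" where
  "Psi G H W ip \<theta> p =
     spherical G H W ip \<theta> (inv\<^bsub>G\<^esub> (rep G H (fst p)) \<otimes>\<^bsub>G\<^esub> rep G H (snd p))"

definition inv_kernels :: "('a, 'b) monoid_scheme \<Rightarrow> 'a set \<Rightarrow> ('a set \<times> 'a set \<Rightarrow> complex) set" where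
  "inv_kernels G H = {F. (\<forall>p. p \<notin> (lcosets\<^bsub>G\<^esub> H) \<times> (lcosets\<^bsub>G\<^esub> H) \<longrightarrow> F p = 0) \<and>
     (\<forall>g\<in>carrier G. \<forall>x\<in>lcosets\<^bsub>G\<^esub> H. \<forall>y\<in>lcosets\<^bsub>G\<^esub> H. F (g <#\<^bsub>G\<^esub> x, g <#\<^bsub>G\<^esub> y) = F (x, y))}"

definition conv :: "('a, 'b) monoid_scheme \<Rightarrow> 'a set \<Rightarrow> ('a set \<times> 'a set \<Rightarrow> complex) \<Rightarrow>
    ('a set \<times> 'a set \<Rightarrow> complex) \<Rightarrow> ('a set \<times> 'a set \<Rightarrow> complex)" where
  "conv G H F1 F2 = (\<lambda>(x, z). \<Sum>y\<in>lcosets\<^bsub>G\<^esub> H. F1 (x, y) * F2 (y, z))"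

definition gelfand_pair :: "('a, 'b) monoid_scheme \<Rightarrow> 'a set \<Rightarrow> bool" where
  "gelfand_pair G H \<longleftrightarrow> (\<forall>F1\<in>inv_kernels G H. \<forall>F2\<in>inv_kernels G H. conv G H F1 F2 = conv G H F2 F1)"

definition inner_XX :: "('a, 'b) monoid_scheme \<Rightarrow> 'a set \<Rightarrow> ('a set \<times> 'a set \<Rightarrow> complex) \<Rightarrow>
    ('a set \<times> 'a set \<Rightarrow> complex) \<Rightarrow> complex" where
  "inner_XX G H a b = (\<Sum>x\<in>lcosets\<^bsub>G\<^esub> H. \<Sum>y\<in>lcosets\<^bsub>G\<^esub> H. a (x, y) * cnj (b (x, y)))"

definition orbits_XX :: "('a, 'b) monoid_scheme \<Rightarrow> 'a set \<Rightarrow> ('a set \<times> 'a set) set set" where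
  "orbits_XX G H = {{(g <#\<^bsub>G\<^esub> x, g <#\<^bsub>G\<^esub> y) | g. g \<in> carrier G} | x y.
      x \<in> lcosets\<^bsub>G\<^esub> H \<and> y \<in> lcosets\<^bsub>G\<^esub> H}"

definition diag_XX :: "('a, 'b) monoid_scheme \<Rightarrow> 'a set \<Rightarrow> ('a set \<times> 'a set) set" where
  "diag_XX G H = {(x, x) | x. x \<in> lcosets\<^bsub>G\<^esub> H}"

definition charfun :: "('c) set \<Rightarrow> 'c \<Rightarrow> complex" where
  "charfun S p = (if p \<in> S then 1 else 0)"

end

theory Submission
  imports Defs "HOL-Computational_Algebra.Fundamental_Theorem_Algebra"
begin

text \<open>
  Let \<open>P\<^sub>j\<close> be the projection of \<open>\<complex>[X]\<close> onto \<open>T\<^sub>j\<close> along the decomposition. Then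
  \<open>\<Psi>\<^sub>j(x, y) = (P\<^sub>j \<delta>\<^sub>y)(x)\<close>: the operator \<open>f \<mapsto> \<Sum>\<^sub>y \<Psi>\<^sub>j(\<cdot>, y) f(y)\<close> is the synthesis
  \<open>f \<mapsto> \<Sum>\<^sub>z f(z) g\<^sub>z\<theta>\<^sub>j\<close> into \<open>T\<^sub>j\<close> followed by taking inner products with the translates
  \<open>g\<^sub>x\<theta>\<^sub>j\<close>, so it commutes with \<open>G\<close>. By Schur's lemma and multiplicity-freeness it vanishes on the
  other components and is a scalar on \<open>T\<^sub>j\<close>; its trace \<open>\<Sum>\<^sub>x \<Psi>\<^sub>j(x, x) = dim T\<^sub>j\<close> forces the
  scalar to be 1. Hence \<open>\<Sum>\<^sub>j \<Psi>\<^sub>j(x, y) = \<delta>\<^sub>x\<^sub>y\<close> since the projections add up to the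
  identity, and \<open>\<Sum>\<^sub>y \<Psi>\<^sub>j(x, y) = (P\<^sub>j 1)(x) = \<delta>\<^sub>j\<^sub>1\<close> since the constants form \<open>T\<^sub>1\<close>.
  Summing \<open>C\<^sub>i\<^sub>j\<close> over the orbits, which partition \<open>X \<times> X\<close>, gives the first identity; summing
  over \<open>j\<close> leaves only the diagonal \<open>O\<^sub>1\<close>, which gives the second.
\<close>

text \<open>Here \<open><#\<close> is the left coset product of HOL-Algebra, not multiset inclusion.\<close>

no_notation (ASCII) subset_mset  (infix \<open><#\<close> 50)

section \<open>Linear maps on function spaces\<close>

lemma vector_space_cscale: "vector_space cscale"
  unfolding vector_space_def cscale_def by (auto simp: fun_eq_iff algebra_simps)

interpretation F: vector_space cscale by (rule vector_space_cscale)
interpretation FF: vector_space_pair cscale cscale ..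

abbreviation clinear :: "(('c \<Rightarrow> complex) \<Rightarrow> ('d \<Rightarrow> complex)) \<Rightarrow> bool" where
  "clinear \<equiv> Vector_Spaces.linear cscale cscale"

lemma cscale_apply [simp]: "cscale c f x = c * f x"
  by (simp add: cscale_def)

lemma sum_fun_apply: "(\<Sum>i\<in>I. (f i :: 'c \<Rightarrow> complex)) x = (\<Sum>i\<in>I. f i x)"
  by (induction I rule: infinite_finite_induct) auto

lemma clinearI:
  assumes "\<And>u v. \<phi> (u + v) = \<phi> u + \<phi> v" "\<And>c u. \<phi> (cscale c u) = cscale c (\<phi> u)"
  shows "clinear \<phi>"
  using assms by (simp add: Vector_Spaces.linear_iff vector_space_cscale)

definition poly_map ::
    "(('c \<Rightarrow> complex) \<Rightarrow> ('c \<Rightarrow> complex)) \<Rightarrow> complex poly \<Rightarrow> ('c \<Rightarrow> complex) \<Rightarrow> ('c \<Rightarrow> complex)" where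
  "poly_map \<phi> p v = (\<Sum>i\<le>degree p. cscale (coeff p i) ((\<phi> ^^ i) v))"

lemma poly_map_eq_sum:
  assumes "degree p \<le> N"
  shows "poly_map \<phi> p v = (\<Sum>i\<le>N. cscale (coeff p i) ((\<phi> ^^ i) v))"
  unfolding poly_map_def
  by (rule sum.mono_neutral_left) (use assms in \<open>auto simp: coeff_eq_0 cscale_def fun_eq_iff\<close>)

lemma poly_map_linear_factor:
  assumes "clinear \<phi>"
  shows "poly_map \<phi> ([:-a, 1:] * p) v = \<phi> (poly_map \<phi> p v) - cscale a (poly_map \<phi> p v)"
proof -
  let ?N = "Suc (degree p)"
  have deg: "degree ([:-a, 1:] * p) \<le> ?N"
    using degree_mult_le[of "[:-a, 1:]" p] by simp
  have shift: "(\<Sum>i\<le>?N. cscale (coeff (pCons 0 p) i) ((\<phi> ^^ i) v))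
      = \<phi> (\<Sum>i\<le>degree p. cscale (coeff p i) ((\<phi> ^^ i) v))"
    by (subst sum.atMost_Suc_shift)
      (simp add: FF.linear_sum[OF assms] FF.linear_scale[OF assms])
  have "poly_map \<phi> ([:-a, 1:] * p) v = (\<Sum>i\<le>?N. cscale (coeff (smult (-a) p + pCons 0 p) i) ((\<phi> ^^ i) v))"
    using poly_map_eq_sum[OF deg] by (simp add: mult_pCons_left)
  also have "\<dots> = cscale (-a) (\<Sum>i\<le>?N. cscale (coeff p i) ((\<phi> ^^ i) v))
      + (\<Sum>i\<le>?N. cscale (coeff (pCons 0 p) i) ((\<phi> ^^ i) v))"
    by (simp only: coeff_add coeff_smult F.scale_left_distrib F.scale_scale[symmetric]
        F.scale_sum_right sum.distrib)
  also have "\<dots> = cscale (-a) (poly_map \<phi> p v) + \<phi> (poly_map \<phi> p v)"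
    by (simp only: poly_map_eq_sum[OF le_SucI[OF order_refl], symmetric] shift poly_map_def)
  also have "\<dots> = \<phi> (poly_map \<phi> p v) - cscale a (poly_map \<phi> p v)"
    by (simp add: fun_eq_iff)
  finally show ?thesis .
qed

lemma poly_map_smult: "poly_map \<phi> (smult c p) v = cscale c (poly_map \<phi> p v)"
proof (cases "c = 0")
  case False
  then show ?thesis
    by (simp add: poly_map_def F.scale_sum_right)
qed (simp add: poly_map_def)

lemma poly_map_in_subspace:
  assumes "F.subspace W" "\<forall>w\<in>W. \<phi> w \<in> W" "v \<in> W"
  shows "poly_map \<phi> p v \<in> W"
proof -
  have "(\<phi> ^^ i) v \<in> W" for i
    by (induction i) (use assms in auto)
  then show ?thesis
    unfolding poly_map_def using assms(1) by (intro F.subspace_sum F.subspace_scale) auto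
qed

lemma exists_eigenvector_of_linear_factors:
  fixes n :: nat
  assumes lin: "clinear \<phi>" and W: "F.subspace W" "\<forall>w\<in>W. \<phi> w \<in> W"
    and w: "w \<in> W" "w \<noteq> 0" "poly_map \<phi> (\<Prod>i<n. [:-r i, 1:]) w = 0"
  shows "\<exists>c v. v \<in> W \<and> v \<noteq> 0 \<and> \<phi> v = cscale c v"
  using w
proof (induction n)
  case (Suc n)
  let ?u = "poly_map \<phi> (\<Prod>i<n. [:-r i, 1:]) w"
  show ?case
  proof (cases "?u = 0")
    case False
    have "(\<Prod>i<Suc n. [:-r i, 1:]) = [:-r n, 1:] * (\<Prod>i<n. [:-r i, 1:])"
      by (simp only: prod.lessThan_Suc mult.commute)
    then have "\<phi> ?u - cscale (r n) ?u = 0"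
      using Suc.prems(3) by (simp only: poly_map_linear_factor[OF lin])
    then have "\<phi> ?u = cscale (r n) ?u"
      by simp
    then show ?thesis
      using False poly_map_in_subspace[OF W Suc.prems(1)] by blast
  qed (use Suc in blast)
qed (simp add: poly_map_def)

lemma nontrivial_relation_in_finite_span:
  assumes S: "finite S" and u: "\<And>i. u i \<in> F.span S"
  shows "\<exists>a. (\<exists>i\<le>card S. a i \<noteq> 0) \<and> (\<Sum>i\<le>card S. cscale (a i) (u i)) = 0"
proof (cases "inj_on u {..card S}")
  case True
  have "card (u ` {..card S}) = Suc (card S)"
    using card_image[OF True] by simp
  moreover have "u ` {..card S} \<subseteq> F.span S"
    using u by blast
  ultimately have "F.dependent (u ` {..card S})"
    using F.independent_span_bound[OF S, of "u ` {..card S}"] by auto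
  then obtain t c where t: "finite t" "t \<subseteq> u ` {..card S}" "\<exists>v\<in>t. c v \<noteq> 0"
      "(\<Sum>v\<in>t. cscale (c v) v) = 0"
    unfolding F.dependent_explicit by blast
  define a where "a i = (if u i \<in> t then c (u i) else 0)" for i
  have "(\<Sum>i\<le>card S. cscale (a i) (u i)) = (\<Sum>i\<in>{i\<in>{..card S}. u i \<in> t}. cscale (c (u i)) (u i))"
    unfolding a_def by (rule sum.mono_neutral_cong_right) auto
  also have "\<dots> = (\<Sum>v\<in>t. cscale (c v) v)"
  proof (rule sym, rule sum.reindex_cong[where l=u])
    show "inj_on u {i \<in> {..card S}. u i \<in> t}"
      using True by (rule inj_on_subset) auto
    show "t = u ` {i \<in> {..card S}. u i \<in> t}"
      using t(2) by auto
  qed simp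
  finally have "(\<Sum>i\<le>card S. cscale (a i) (u i)) = 0"
    using t(4) by simp
  moreover have "\<exists>i\<le>card S. a i \<noteq> 0"
    using t(2,3) unfolding a_def by auto
  ultimately show ?thesis by blast
next
  case False
  then obtain i j where ij: "i \<le> card S" "j \<le> card S" "i \<noteq> j" "u i = u j"
    unfolding inj_on_def by auto
  define a where "a l = (if l = i then 1 else if l = j then -1 else (0::complex))" for l
  have "(\<Sum>l\<le>card S. cscale (a l) (u l)) = (\<Sum>l\<in>{i, j}. cscale (a l) (u l))"
    unfolding a_def by (rule sum.mono_neutral_right) (use ij in auto)
  also have "\<dots> = 0"
    using ij by (simp add: a_def)
  finally have "(\<Sum>l\<le>card S. cscale (a l) (u l)) = 0" .
  moreover have "a i \<noteq> 0"
    by (simp add: a_def)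
  ultimately show ?thesis
    using ij(1) by blast
qed

lemma exists_annihilating_poly:
  assumes S: "finite S" "W \<subseteq> F.span S" and W: "\<forall>w\<in>W. \<phi> w \<in> W" and w: "w \<in> W"
  shows "\<exists>p. p \<noteq> 0 \<and> poly_map \<phi> p w = 0"
proof -
  have "(\<phi> ^^ i) w \<in> W" for i
    by (induction i) (use W w in auto)
  then have "(\<phi> ^^ i) w \<in> F.span S" for i
    using S(2) by blast
  then obtain a where a: "\<exists>i\<le>card S. a i \<noteq> 0" "(\<Sum>i\<le>card S. cscale (a i) ((\<phi> ^^ i) w)) = 0"
    using nontrivial_relation_in_finite_span[OF S(1), of "\<lambda>i. (\<phi> ^^ i) w"] by blast
  define p where "p = (\<Sum>i\<le>card S. monom (a i) i)"
  have coeff_p: "coeff p i = (if i \<le> card S then a i else 0)" for i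
    unfolding p_def by (simp add: coeff_sum coeff_monom)
  have "degree p \<le> card S"
    by (rule degree_le) (simp add: coeff_p)
  then have "poly_map \<phi> p w = (\<Sum>i\<le>card S. cscale (coeff p i) ((\<phi> ^^ i) w))"
    by (rule poly_map_eq_sum)
  also have "\<dots> = 0"
    using a(2) by (simp add: coeff_p)
  finally have "poly_map \<phi> p w = 0" .
  moreover have "p \<noteq> 0"
    using a(1) coeff_p by (metis coeff_0)
  ultimately show ?thesis by blast
qed

lemma exists_eigenvector:
  assumes lin: "clinear \<phi>" and W: "F.subspace W" "\<forall>w\<in>W. \<phi> w \<in> W" "W \<noteq> {0}"
    and S: "finite S" "W \<subseteq> F.span S"
  shows "\<exists>c v. v \<in> W \<and> v \<noteq> 0 \<and> \<phi> v = cscale c v"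
proof -
  obtain w where w: "w \<in> W" "w \<noteq> 0"
    using W(3) F.subspace_0[OF W(1)] by blast
  obtain p where p: "p \<noteq> 0" "poly_map \<phi> p w = 0"
    using exists_annihilating_poly[OF S W(2) w(1)] by blast
  obtain r where r: "smult (lead_coeff p) (\<Prod>i<degree p. [:-r i, 1:]) = p"
    using complex_poly_decompose' by blast
  have "cscale (lead_coeff p) (poly_map \<phi> (\<Prod>i<degree p. [:-r i, 1:]) w) = 0"
    using p(2) by (simp only: poly_map_smult[symmetric] r)
  then have "poly_map \<phi> (\<Prod>i<degree p. [:-r i, 1:]) w = 0"
    using p(1) by simp
  then show ?thesis
    by (rule exists_eigenvector_of_linear_factors[OF lin W(1,2) w])
qed

locale finite_coset_space =
  fixes G :: "('a, 'b) monoid_scheme" (structure) and H :: "'a set"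
  assumes group: "group G" and finite_carrier: "finite (carrier G)" and subgroup: "subgroup H G"

sublocale finite_coset_space \<subseteq> group G
  by (rule group)

sublocale finite_coset_space \<subseteq> Hs: subgroup H G
  by (rule subgroup)

context finite_coset_space
begin

abbreviation X :: "'a set set" where
  "X \<equiv> lcosets\<^bsub>G\<^esub> H"

lemma finite_X: "finite X"
  using lcosets_subset_PowG[OF subgroup] finite_carrier by (meson finite_Pow_iff finite_subset)

lemma X_iff: "x \<in> X \<longleftrightarrow> (\<exists>g\<in>carrier G. x = g <# H)"
  by (auto simp: LCOSETS_def)

lemma H_in_X: "H \<in> X"
proof -
  have "\<one> <# H = H"
    by (rule lcos_mult_one[OF Hs.subset])
  then show ?thesis
    using X_iff one_closed by metis
qed

lemma card_X_neq_0: "card X \<noteq> 0"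
  using finite_X H_in_X by auto

lemma rep_carrier: "x \<in> X \<Longrightarrow> rep G H x \<in> carrier G"
  and rep_lcos: "x \<in> X \<Longrightarrow> x = rep G H x <# H"
proof -
  assume "x \<in> X"
  then have "\<exists>g. g \<in> carrier G \<and> x = g <# H"
    by (auto simp: X_iff)
  then have "rep G H x \<in> carrier G \<and> x = rep G H x <# H"
    unfolding rep_def by (rule someI_ex)
  then show "rep G H x \<in> carrier G" "x = rep G H x <# H"
    by auto
qed

lemma lmult_closed:
  assumes "g \<in> carrier G" "x \<in> X"
  shows "g <# x \<in> X"
proof -
  obtain a where "a \<in> carrier G" "x = a <# H"
    using assms(2) X_iff by blast
  then show ?thesis
    using assms(1) X_iff lcos_m_assoc[OF Hs.subset] by (metis m_closed)
qed

lemma lmult_assoc: "g \<in> carrier G \<Longrightarrow> g' \<in> carrier G \<Longrightarrow> x \<in> X \<Longrightarrow> g <# (g' <# x) = (g \<otimes> g') <# x"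
  using Hs.lcosets_carrier[OF group] by (simp add: lcos_m_assoc subsetD)

lemma lmult_one: "x \<in> X \<Longrightarrow> \<one> <# x = x"
  using Hs.lcosets_carrier[OF group] by (simp add: lcos_mult_one subsetD)

lemma lmult_inv_cancel: "g \<in> carrier G \<Longrightarrow> x \<in> X \<Longrightarrow> inv g <# (g <# x) = x"
  and lmult_cancel_inv: "g \<in> carrier G \<Longrightarrow> x \<in> X \<Longrightarrow> g <# (inv g <# x) = x"
  by (simp_all add: lmult_assoc lmult_one)

lemma bij_betw_lmult: "g \<in> carrier G \<Longrightarrow> bij_betw (\<lambda>x. g <# x) X X"
  by (rule bij_betwI[where g="\<lambda>x. inv g <# x"]) (auto simp: lmult_closed lmult_inv_cancel lmult_cancel_inv)

lemma lcos_eq_imp_inv_mult_in: "a \<in> carrier G \<Longrightarrow> b \<in> carrier G \<Longrightarrow> a <# H = b <# H \<Longrightarrow> inv a \<otimes> b \<in> H"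
proof -
  assume "a \<in> carrier G" "b \<in> carrier G" "a <# H = b <# H"
  then have "b \<in> a <# H"
    using lcos_self[OF _ subgroup] by metis
  then show "inv a \<otimes> b \<in> H"
    using Hs.lcos_module_imp[OF group \<open>a \<in> carrier G\<close>] \<open>b \<in> carrier G\<close> by blast
qed

lemma permsp_iff: "f \<in> permsp G H \<longleftrightarrow> (\<forall>x. x \<notin> X \<longrightarrow> f x = 0)"
  by (simp add: permsp_def)

lemma act_apply: "act G H g f x = (if x \<in> X then f (inv g <# x) else 0)"
  by (simp add: act_def)

lemma act_in_permsp: "act G H g f \<in> permsp G H"
  by (simp add: permsp_iff act_apply)

lemma clinear_act: "clinear (act G H g)"
  by (rule clinearI) (auto simp: fun_eq_iff act_apply)

lemma act_mult:
  assumes "g \<in> carrier G" "g' \<in> carrier G"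
  shows "act G H g (act G H g' f) = act G H (g \<otimes> g') f"
proof
  fix x
  show "act G H g (act G H g' f) x = act G H (g \<otimes> g') f x"
  proof (cases "x \<in> X")
    case True
    then have "inv g' <# (inv g <# x) = inv (g \<otimes> g') <# x"
      using assms by (simp add: lmult_assoc inv_mult_group)
    then show ?thesis
      using True lmult_closed[OF inv_closed[OF assms(1)] True] by (simp add: act_apply)
  qed (simp add: act_apply)
qed

lemma act_one: "f \<in> permsp G H \<Longrightarrow> act G H \<one> f = f"
  by (auto simp: fun_eq_iff act_apply lmult_one permsp_iff)

lemma act_inv_cancel: "g \<in> carrier G \<Longrightarrow> f \<in> permsp G H \<Longrightarrow> act G H (inv g) (act G H g f) = f"
  by (simp add: act_mult act_one)

definition delta :: "'a set \<Rightarrow> 'a set \<Rightarrow> complex" where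
  "delta y = (\<lambda>x. if x = y then 1 else 0)"

lemma delta_in_permsp: "y \<in> X \<Longrightarrow> delta y \<in> permsp G H"
  by (auto simp: delta_def permsp_iff)

lemma permsp_eq_sum_delta:
  assumes "f \<in> permsp G H"
  shows "f = (\<Sum>y\<in>X. cscale (f y) (delta y))"
proof
  fix x
  have "(\<Sum>y\<in>X. cscale (f y) (delta y)) x = (\<Sum>y\<in>X. if y = x then f y else 0)"
    unfolding sum_fun_apply by (rule sum.cong) (auto simp: delta_def)
  also have "\<dots> = f x"
    using finite_X assms by (simp add: sum.delta permsp_iff)
  finally show "f x = (\<Sum>y\<in>X. cscale (f y) (delta y)) x" ..
qed

lemma permsp_subset_span_delta: "permsp G H \<subseteq> F.span (delta ` X)"
proof
  fix f
  assume "f \<in> permsp G H"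
  then have "f = (\<Sum>y\<in>X. cscale (f y) (delta y))"
    by (rule permsp_eq_sum_delta)
  also have "\<dots> \<in> F.span (delta ` X)"
    by (intro F.span_sum F.span_scale F.span_base) auto
  finally show "f \<in> F.span (delta ` X)" .
qed

subsection \<open>Schur's lemma\<close>

definition intertwiner ::
    "('a set \<Rightarrow> complex) set \<Rightarrow> ('a set \<Rightarrow> complex) set \<Rightarrow> (('a set \<Rightarrow> complex) \<Rightarrow> ('a set \<Rightarrow> complex)) \<Rightarrow> bool" where
  "intertwiner U W \<phi> \<longleftrightarrow> clinear \<phi> \<and> \<phi> ` U \<subseteq> W \<and>
     (\<forall>g\<in>carrier G. \<forall>f\<in>U. \<phi> (act G H g f) = act G H g (\<phi> f))"

lemma subrep_kernel:
  assumes U: "subrep G H U" and \<phi>: "intertwiner U W \<phi>"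
  shows "subrep G H {f \<in> U. \<phi> f = 0}"
proof -
  have "{f \<in> U. \<phi> f = 0} = U \<inter> {f. \<phi> f = 0}"
    by blast
  then have "F.subspace {f \<in> U. \<phi> f = 0}"
    using U \<phi> by (simp add: F.subspace_inter FF.linear_subspace_kernel subrep_def intertwiner_def)
  then show ?thesis
    using U \<phi> FF.linear_0[OF clinear_act] by (auto simp: subrep_def intertwiner_def)
qed

lemma subrep_image:
  assumes U: "subrep G H U" and W: "subrep G H W" and \<phi>: "intertwiner U W \<phi>"
  shows "subrep G H (\<phi> ` U)"
  unfolding subrep_def
proof (intro conjI ballI)
  show "F.subspace (\<phi> ` U)"
    using U \<phi> by (simp add: FF.linear_subspace_image subrep_def intertwiner_def)
  show "\<phi> ` U \<subseteq> permsp G H"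
    using W \<phi> by (auto simp: subrep_def intertwiner_def)
  fix g f
  assume g: "g \<in> carrier G" and "f \<in> \<phi> ` U"
  then obtain u where "u \<in> U" "f = \<phi> u"
    by blast
  then show "act G H g f \<in> \<phi> ` U"
    using U \<phi> g by (auto simp: subrep_def intertwiner_def intro!: image_eqI[of _ \<phi> "act G H g u"])
qed

lemma intertwiner_irred_iso:
  assumes U: "irred_subrep G H U" and W: "irred_subrep G H W" and \<phi>: "intertwiner U W \<phi>"
    and f: "f \<in> U" "\<phi> f \<noteq> 0"
  shows "iso_subreps G H U W"
proof -
  have lin: "clinear \<phi>" and "\<phi> ` U \<subseteq> W"
    using \<phi> by (auto simp: intertwiner_def)
  have "{u \<in> U. \<phi> u = 0} \<noteq> U"
    using f by blast
  then have "{u \<in> U. \<phi> u = 0} = {0}"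
    using U subrep_kernel[OF _ \<phi>] by (auto simp: irred_subrep_def)
  then have "inj_on \<phi> U"
    using U FF.linear_inj_on_iff_eq_0[OF lin] by (auto simp: irred_subrep_def subrep_def)
  moreover have "\<phi> ` U = W"
  proof -
    have "subrep G H (\<phi> ` U)"
      using U W subrep_image[OF _ _ \<phi>] by (simp add: irred_subrep_def)
    moreover have "\<phi> ` U \<noteq> {0}"
      using f by blast
    ultimately show ?thesis
      using W \<open>\<phi> ` U \<subseteq> W\<close> unfolding irred_subrep_def by blast
  qed
  ultimately show ?thesis
    using lin \<phi> by (auto simp: iso_subreps_def intertwiner_def bij_betw_def)
qed

lemma intertwiner_irred_scalar:
  assumes W: "irred_subrep G H W" and \<phi>: "intertwiner W W \<phi>"
  obtains c where "\<forall>f\<in>W. \<phi> f = cscale c f"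
proof -
  have lin: "clinear \<phi>"
    using \<phi> by (simp add: intertwiner_def)
  have sub: "F.subspace W" "W \<subseteq> F.span (delta ` X)"
    using W permsp_subset_span_delta by (auto simp: irred_subrep_def subrep_def)
  obtain c v where v: "v \<in> W" "v \<noteq> 0" "\<phi> v = cscale c v"
    using exists_eigenvector[OF lin sub(1) _ _ finite_imageI[OF finite_X] sub(2)] \<phi> W
    by (auto simp: intertwiner_def irred_subrep_def)
  let ?\<psi> = "\<lambda>f. \<phi> f - cscale c f"
  have \<psi>: "intertwiner W W ?\<psi>"
    using \<phi> sub(1) unfolding intertwiner_def
    by (auto simp: FF.linear_compose_sub F.linear_scale_self F.subspace_diff F.subspace_scale
        FF.linear_diff[OF clinear_act] FF.linear_scale[OF clinear_act])
  have "subrep G H {f \<in> W. ?\<psi> f = 0}"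
    using W subrep_kernel[OF _ \<psi>] by (simp add: irred_subrep_def)
  moreover have "{f \<in> W. ?\<psi> f = 0} \<noteq> {0}"
    using v by auto
  ultimately have "{f \<in> W. ?\<psi> f = 0} = W"
    using W unfolding irred_subrep_def by blast
  then show ?thesis
    using that by (metis (mono_tags, lifting) mem_Collect_eq right_minus_eq)
qed

lemma finite_basis_exists:
  assumes "W \<subseteq> permsp G H"
  obtains B where "B \<subseteq> W" "F.independent B" "W \<subseteq> F.span B" "card B = F.dim W" "finite B"
proof -
  obtain B where B: "B \<subseteq> W" "F.independent B" "W \<subseteq> F.span B" "card B = F.dim W"
    using F.basis_exists by blast
  moreover have "finite B"
    using F.independent_span_bound[OF finite_imageI[OF finite_X] B(2)] B(1) assms
      permsp_subset_span_delta by blast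
  ultimately show ?thesis
    using that by blast
qed

lemma dim_neq_0:
  assumes "W \<subseteq> permsp G H" "w \<in> W" "w \<noteq> 0"
  shows "F.dim W \<noteq> 0"
proof
  assume "F.dim W = 0"
  moreover obtain B where "W \<subseteq> F.span B" "card B = F.dim W" "finite B"
    using finite_basis_exists[OF assms(1)] by blast
  ultimately show False
    using assms(2,3) by auto
qed

lemma sum_diag_projection_eq_dim:
  assumes W: "W \<subseteq> permsp G H" and P: "clinear P" "P ` permsp G H \<subseteq> W" "\<forall>w\<in>W. P w = w"
  shows "(\<Sum>x\<in>X. P (delta x) x) = of_nat (F.dim W)"
proof -
  obtain B where B: "B \<subseteq> W" "F.independent B" "W \<subseteq> F.span B" "card B = F.dim W" "finite B"
    using finite_basis_exists[OF W] by blast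
  let ?r = "F.representation B"
  have span: "P (delta x) \<in> F.span B" if "x \<in> X" for x
    using P(2) B(3) delta_in_permsp[OF that] by blast
  have "(\<Sum>x\<in>X. P (delta x) x) = (\<Sum>x\<in>X. \<Sum>b\<in>B. ?r (P (delta x)) b * b x)"
  proof (rule sum.cong[OF refl])
    fix x
    assume "x \<in> X"
    then have "P (delta x) = (\<Sum>b\<in>B. cscale (?r (P (delta x)) b) b)"
      using F.sum_representation_eq[OF B(2) span B(5) order_refl] by simp
    then have "P (delta x) x = (\<Sum>b\<in>B. cscale (?r (P (delta x)) b) b) x"
      by (rule fun_cong)
    then show "P (delta x) x = (\<Sum>b\<in>B. ?r (P (delta x)) b * b x)"
      by (simp only: sum_fun_apply cscale_apply)
  qed
  also have "\<dots> = (\<Sum>b\<in>B. \<Sum>x\<in>X. ?r (P (delta x)) b * b x)"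
    by (rule sum.swap)
  also have "\<dots> = (\<Sum>b\<in>B. 1)"
  proof (rule sum.cong[OF refl])
    fix b
    assume b: "b \<in> B"
    have "(\<Sum>x\<in>X. cscale (b x) (P (delta x))) = P (\<Sum>x\<in>X. cscale (b x) (delta x))"
      by (simp add: FF.linear_sum[OF P(1)] FF.linear_scale[OF P(1)])
    also have "\<dots> = P b"
      using b B(1) W by (metis permsp_eq_sum_delta subsetD)
    also have "\<dots> = b"
      using P(3) b B(1) by blast
    finally have "?r b b = ?r (\<Sum>x\<in>X. cscale (b x) (P (delta x))) b"
      by simp
    also have "\<dots> = (\<Sum>x\<in>X. ?r (P (delta x)) b * b x)"
      using span by (simp add: F.representation_sum[OF B(2)] F.span_scale F.representation_scale[OF B(2)] mult.commute)
    finally show "(\<Sum>x\<in>X. ?r (P (delta x)) b * b x) = 1"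
      using F.representation_basis[OF B(2) b] by simp
  qed
  finally show ?thesis
    using B(4) by simp
qed

definition diag_orbit :: "'a set \<Rightarrow> 'a set \<Rightarrow> ('a set \<times> 'a set) set" where
  "diag_orbit x y = {(g <# x, g <# y) | g. g \<in> carrier G}"

lemma orbits_XX_eq: "orbits_XX G H = {diag_orbit x y | x y. x \<in> X \<and> y \<in> X}"
  by (simp add: orbits_XX_def diag_orbit_def)

lemma in_diag_orbit_self: "x \<in> X \<Longrightarrow> y \<in> X \<Longrightarrow> (x, y) \<in> diag_orbit x y"
  unfolding diag_orbit_def using lmult_one by (intro CollectI exI[of _ \<one>]) auto

lemma diag_orbit_eq:
  assumes x: "x \<in> X" and y: "y \<in> X" and p: "(a, b) \<in> diag_orbit x y"
  shows "diag_orbit a b = diag_orbit x y"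
proof -
  obtain g where g: "g \<in> carrier G" "a = g <# x" "b = g <# y"
    using p by (auto simp: diag_orbit_def)
  show ?thesis
  proof
    show "diag_orbit a b \<subseteq> diag_orbit x y"
    proof
      fix q
      assume "q \<in> diag_orbit a b"
      then obtain h where h: "h \<in> carrier G" "q = (h <# a, h <# b)"
        by (auto simp: diag_orbit_def)
      then have "q = ((h \<otimes> g) <# x, (h \<otimes> g) <# y)"
        using g x y by (simp add: lmult_assoc)
      then show "q \<in> diag_orbit x y"
        using h g unfolding diag_orbit_def by blast
    qed
    show "diag_orbit x y \<subseteq> diag_orbit a b"
    proof
      fix q
      assume "q \<in> diag_orbit x y"
      then obtain h where h: "h \<in> carrier G" "q = (h <# x, h <# y)"
        by (auto simp: diag_orbit_def)
      have hg: "h \<otimes> inv g \<in> carrier G" "(h \<otimes> inv g) \<otimes> g = h"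
        using g h by (simp_all add: m_assoc)
      then have "q = ((h \<otimes> inv g) <# a, (h \<otimes> inv g) <# b)"
        using g h x y by (simp add: lmult_assoc)
      then show "q \<in> diag_orbit a b"
        using hg(1) unfolding diag_orbit_def by blast
    qed
  qed
qed

lemma orbits_XX_disjoint:
  assumes "O1 \<in> orbits_XX G H" "O2 \<in> orbits_XX G H" "p \<in> O1" "p \<in> O2"
  shows "O1 = O2"
proof -
  obtain x y where "x \<in> X" "y \<in> X" "O1 = diag_orbit x y"
    using assms(1) by (auto simp: orbits_XX_eq)
  moreover obtain x' y' where "x' \<in> X" "y' \<in> X" "O2 = diag_orbit x' y'"
    using assms(2) by (auto simp: orbits_XX_eq)
  moreover obtain a b where "p = (a, b)"
    by fastforce
  ultimately show ?thesis
    using assms(3,4) diag_orbit_eq by metis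
qed

lemma orbit_index_exists:
  fixes Orb :: "nat \<Rightarrow> ('a set \<times> 'a set) set"
  assumes Orb: "bij_betw Orb {1..k} (orbits_XX G H)" and "x \<in> X" "y \<in> X"
  obtains i where "i \<in> {1..k}" "(x, y) \<in> Orb i"
proof -
  have "diag_orbit x y \<in> Orb ` {1..k}"
    unfolding bij_betw_imp_surj_on[OF Orb] orbits_XX_eq using assms(2,3) by blast
  then show ?thesis
    using that in_diag_orbit_self[OF assms(2,3)] by force
qed

lemma orbit_index_unique:
  fixes Orb :: "nat \<Rightarrow> ('a set \<times> 'a set) set"
  assumes Orb: "bij_betw Orb {1..k} (orbits_XX G H)"
    and "i \<in> {1..k}" "i' \<in> {1..k}" "p \<in> Orb i" "p \<in> Orb i'"
  shows "i = i'"
proof -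
  have "Orb i \<in> orbits_XX G H" "Orb i' \<in> orbits_XX G H"
    using bij_betw_apply[OF Orb] assms(2,3) by blast+
  then have "Orb i = Orb i'"
    using orbits_XX_disjoint assms(4,5) by blast
  then show ?thesis
    using inj_onD[OF bij_betw_imp_inj_on[OF Orb]] assms(2,3) by blast
qed

lemma sum_charfun_orbits:
  fixes Orb :: "nat \<Rightarrow> ('a set \<times> 'a set) set"
  assumes Orb: "bij_betw Orb {1..k} (orbits_XX G H)" and "x \<in> X" "y \<in> X"
  shows "(\<Sum>i\<in>{1..k}. charfun (Orb i) (x, y)) = 1"
proof -
  obtain i where i: "i \<in> {1..k}" "(x, y) \<in> Orb i"
    using orbit_index_exists[OF assms] .
  have "(\<Sum>i'\<in>{1..k}. charfun (Orb i') (x, y)) = (\<Sum>i'\<in>{1..k}. if i' = i then 1 else 0)"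
  proof (rule sum.cong[OF refl])
    fix i'
    assume "i' \<in> {1..k}"
    then show "charfun (Orb i') (x, y) = (if i' = i then 1 else 0)"
      using i orbit_index_unique[OF Orb] unfolding charfun_def by metis
  qed
  also have "\<dots> = 1"
    using i(1) by simp
  finally show ?thesis .
qed

lemma charfun_orbit_diag:
  fixes Orb :: "nat \<Rightarrow> ('a set \<times> 'a set) set"
  assumes Orb: "bij_betw Orb {1..k} (orbits_XX G H)" and Orb1: "Orb 1 = diag_XX G H"
    and i: "i \<in> {1..k}" and x: "x \<in> X"
  shows "charfun (Orb i) (x, x) = (if i = 1 then 1 else 0)"
proof -
  have "1 \<in> {1..k}" "(x, x) \<in> Orb 1"
    using i x Orb1 by (auto simp: diag_XX_def)
  then show ?thesis
    using i orbit_index_unique[OF Orb] unfolding charfun_def by metis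
qed

end

section \<open>Isotypic projections\<close>

locale multiplicity_free_decomposition = finite_coset_space +
  fixes m :: nat and T :: "nat \<Rightarrow> ('a set \<Rightarrow> complex) set"
  assumes direct_sum: "direct_sum_decomp G H m T"
    and irreducible: "\<forall>j\<in>{1..m}. irred_subrep G H (T j)"
    and pairwise_non_iso: "\<forall>i\<in>{1..m}. \<forall>j\<in>{1..m}. i \<noteq> j \<longrightarrow> \<not> iso_subreps G H (T i) (T j)"
begin

lemma subspace_T: "j \<in> {1..m} \<Longrightarrow> F.subspace (T j)"
  and T_subset_permsp: "j \<in> {1..m} \<Longrightarrow> T j \<subseteq> permsp G H"
  and act_in_T: "j \<in> {1..m} \<Longrightarrow> g \<in> carrier G \<Longrightarrow> f \<in> T j \<Longrightarrow> act G H g f \<in> T j"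
  and T_neq_zero: "j \<in> {1..m} \<Longrightarrow> T j \<noteq> {0}"
  using irreducible by (auto simp: irred_subrep_def subrep_def)

lemma zero_in_T: "j \<in> {1..m} \<Longrightarrow> 0 \<in> T j"
  using F.subspace_0[OF subspace_T] .

lemma ex1_decomposition:
  "f \<in> permsp G H \<Longrightarrow> \<exists>!fs. fs \<in> (\<Pi>\<^sub>E i\<in>{1..m}. T i) \<and> f = (\<Sum>i\<in>{1..m}. fs i)"
  using direct_sum by (simp add: direct_sum_decomp_def)

definition restrict_X :: "('a set \<Rightarrow> complex) \<Rightarrow> ('a set \<Rightarrow> complex)" where
  "restrict_X f = (\<lambda>x. if x \<in> X then f x else 0)"

text \<open>Components are taken of the restriction to \<open>X\<close>, so that \<open>component j\<close> is linear on all
  functions and not only on \<open>permsp G H\<close>.\<close>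

definition component :: "nat \<Rightarrow> ('a set \<Rightarrow> complex) \<Rightarrow> ('a set \<Rightarrow> complex)" where
  "component j f = (THE fs. fs \<in> (\<Pi>\<^sub>E i\<in>{1..m}. T i) \<and> restrict_X f = (\<Sum>i\<in>{1..m}. fs i)) j"

lemma restrict_X_permsp: "restrict_X f \<in> permsp G H"
  by (simp add: restrict_X_def permsp_iff)

lemma restrict_X_id: "f \<in> permsp G H \<Longrightarrow> restrict_X f = f"
  by (auto simp: restrict_X_def permsp_iff)

lemma component_eqI:
  assumes fs: "fs \<in> (\<Pi>\<^sub>E i\<in>{1..m}. T i)" and f: "restrict_X f = (\<Sum>i\<in>{1..m}. fs i)"
    and j: "j \<in> {1..m}"
  shows "component j f = fs j"
proof -
  have "(THE fs. fs \<in> (\<Pi>\<^sub>E i\<in>{1..m}. T i) \<and> restrict_X f = (\<Sum>i\<in>{1..m}. fs i)) = fs"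
    by (rule the1_equality[OF ex1_decomposition[OF restrict_X_permsp]]) (use fs f in blast)
  then show ?thesis
    by (simp add: component_def)
qed

lemma components_decompose:
  "(\<lambda>j\<in>{1..m}. component j f) \<in> (\<Pi>\<^sub>E i\<in>{1..m}. T i) \<and> restrict_X f = (\<Sum>j\<in>{1..m}. component j f)"
proof -
  obtain fs where fs: "fs \<in> (\<Pi>\<^sub>E i\<in>{1..m}. T i)" "restrict_X f = (\<Sum>i\<in>{1..m}. fs i)"
    using ex1_decomposition[OF restrict_X_permsp] by blast
  have "(\<lambda>j\<in>{1..m}. component j f) = fs"
    using fs component_eqI[OF fs] by (auto simp: PiE_def extensional_def)
  then show ?thesis
    using fs by (auto intro: sum.cong)
qed

lemma component_in_T: "j \<in> {1..m} \<Longrightarrow> component j f \<in> T j"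
  using components_decompose[of f] by (auto simp: PiE_def Pi_def)

lemma sum_components: "f \<in> permsp G H \<Longrightarrow> (\<Sum>j\<in>{1..m}. component j f) = f"
  using components_decompose[of f] restrict_X_id by simp

lemma component_of_T:
  assumes "v \<in> T j" "j \<in> {1..m}" "i \<in> {1..m}"
  shows "component i v = (if i = j then v else 0)"
proof -
  have "v \<in> permsp G H"
    using assms T_subset_permsp by blast
  then have "restrict_X v = (\<Sum>i\<in>{1..m}. (\<lambda>i\<in>{1..m}. if i = j then v else 0) i)"
    using assms(2) by (simp add: restrict_X_id sum.delta)
  then show ?thesis
    using assms by (subst component_eqI[where fs="\<lambda>i\<in>{1..m}. if i = j then v else 0"])
      (auto simp: zero_in_T)
qed

lemma clinear_component:
  assumes j: "j \<in> {1..m}"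
  shows "clinear (component j)"
proof (rule clinearI)
  fix u v :: "'a set \<Rightarrow> complex" and c :: complex
  let ?fs = "\<lambda>i\<in>{1..m}. component i u + component i v"
  have "?fs \<in> (\<Pi>\<^sub>E i\<in>{1..m}. T i)"
    unfolding restrict_PiE_iff by (blast intro: F.subspace_add[OF subspace_T] component_in_T)
  moreover have "restrict_X (u + v) = restrict_X u + restrict_X v"
    by (auto simp: restrict_X_def)
  then have "restrict_X (u + v) = (\<Sum>i\<in>{1..m}. ?fs i)"
    using components_decompose[of u] components_decompose[of v] by (simp add: sum.distrib)
  ultimately have "component j (u + v) = ?fs j"
    by (rule component_eqI[OF _ _ j])
  then show "component j (u + v) = component j u + component j v"
    using j by simp
next
  fix u :: "'a set \<Rightarrow> complex" and c :: complex
  let ?fs = "\<lambda>i\<in>{1..m}. cscale c (component i u)"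
  have "?fs \<in> (\<Pi>\<^sub>E i\<in>{1..m}. T i)"
    unfolding restrict_PiE_iff by (blast intro: F.subspace_scale[OF subspace_T] component_in_T)
  moreover have "restrict_X (cscale c u) = cscale c (restrict_X u)"
    by (auto simp: restrict_X_def)
  then have "restrict_X (cscale c u) = (\<Sum>i\<in>{1..m}. ?fs i)"
    using components_decompose[of u] by (simp add: F.scale_sum_right)
  ultimately have "component j (cscale c u) = ?fs j"
    by (rule component_eqI[OF _ _ j])
  then show "component j (cscale c u) = cscale c (component j u)"
    using j by simp
qed

lemma sum_components_single:
  assumes "j \<in> {1..m}" "\<And>i. i \<in> {1..m} \<Longrightarrow> i \<noteq> j \<Longrightarrow> h i = 0"
  shows "(\<Sum>i\<in>{1..m}. h i) = (h j :: 'c :: comm_monoid_add)"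
  using sum.mono_neutral_left[of "{1..m}" "{j}" h] assms by auto

lemma component_act:
  assumes f: "f \<in> permsp G H" and g: "g \<in> carrier G" and j: "j \<in> {1..m}"
  shows "component j (act G H g f) = act G H g (component j f)"
proof -
  let ?fs = "\<lambda>i\<in>{1..m}. act G H g (component i f)"
  have "?fs \<in> (\<Pi>\<^sub>E i\<in>{1..m}. T i)"
    unfolding restrict_PiE_iff using g by (blast intro: act_in_T component_in_T)
  moreover have "restrict_X (act G H g f) = (\<Sum>i\<in>{1..m}. ?fs i)"
    using sum_components[OF f]
    by (simp add: restrict_X_id[OF act_in_permsp] FF.linear_sum[OF clinear_act, symmetric])
  ultimately have "component j (act G H g f) = ?fs j"
    by (rule component_eqI[OF _ _ j])
  then show ?thesis
    using j by simp
qed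

lemma intertwiner_between_components_eq_0:
  assumes "i \<in> {1..m}" "j \<in> {1..m}" "i \<noteq> j" "intertwiner (T i) (T j) \<phi>" "f \<in> T i"
  shows "\<phi> f = 0"
  using intertwiner_irred_iso[of "T i" "T j" \<phi> f] assms irreducible pairwise_non_iso by blast

lemma intertwiner_factors_through_component:
  assumes j: "j \<in> {1..m}" and \<phi>: "intertwiner (permsp G H) (T j) \<phi>" and f: "f \<in> permsp G H"
  shows "\<phi> f = \<phi> (component j f)"
proof -
  have "intertwiner (T i) (T j) \<phi>" if "i \<in> {1..m}" for i
    using \<phi> T_subset_permsp[OF that] by (auto simp: intertwiner_def)
  then have "\<phi> (component i f) = 0" if "i \<in> {1..m}" "i \<noteq> j" for i
    using that j by (intro intertwiner_between_components_eq_0[of i j]) (auto simp: component_in_T)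
  moreover have "\<phi> f = (\<Sum>i\<in>{1..m}. \<phi> (component i f))"
    using \<phi> sum_components[OF f] by (metis FF.linear_sum intertwiner_def)
  ultimately show ?thesis
    using sum_components_single[OF j, of "\<lambda>i. \<phi> (component i f)"] by simp
qed

lemma intertwiner_maps_into_component:
  assumes j: "j \<in> {1..m}" and \<psi>: "intertwiner (T j) (permsp G H) \<psi>" and v: "v \<in> T j"
  shows "\<psi> v \<in> T j"
proof -
  have "intertwiner (T j) (T i) (\<lambda>f. component i (\<psi> f))" if i: "i \<in> {1..m}" for i
    unfolding intertwiner_def
  proof (intro conjI ballI)
    show "clinear (\<lambda>f. component i (\<psi> f))"
      using \<psi> Vector_Spaces.linear_compose[of cscale cscale \<psi> cscale "component i"] clinear_component[OF i]
      by (simp add: intertwiner_def comp_def)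
    show "(\<lambda>f. component i (\<psi> f)) ` T j \<subseteq> T i"
      using component_in_T[OF i] by blast
    fix g f
    assume "g \<in> carrier G" "f \<in> T j"
    then show "component i (\<psi> (act G H g f)) = act G H g (component i (\<psi> f))"
      using \<psi> i by (auto simp: intertwiner_def component_act)
  qed
  then have "component i (\<psi> v) = 0" if "i \<in> {1..m}" "i \<noteq> j" for i
    using that j v by (intro intertwiner_between_components_eq_0[of j i]) auto
  moreover have "\<psi> v = (\<Sum>i\<in>{1..m}. component i (\<psi> v))"
    using \<psi> v sum_components by (auto simp: intertwiner_def)
  ultimately have "\<psi> v = component j (\<psi> v)"
    using sum_components_single[OF j, of "\<lambda>i. component i (\<psi> v)"] by simp
  then show ?thesis
    using component_in_T[OF j] by metis
qed

end

section \<open>The kernel of a spherical function\<close>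

locale spherical_vector = multiplicity_free_decomposition +
  fixes j :: nat and I :: "('a set \<Rightarrow> complex) \<Rightarrow> ('a set \<Rightarrow> complex) \<Rightarrow> complex"
    and \<theta> :: "'a set \<Rightarrow> complex"
  assumes j: "j \<in> {1..m}" and inner: "ginv_inner G H (T j) I"
    and \<theta>_in_T: "\<theta> \<in> T j" and \<theta>_H_invariant: "\<And>h. h \<in> H \<Longrightarrow> act G H h \<theta> = \<theta>"
    and \<theta>_unit: "I \<theta> \<theta> = 1"
begin

lemma inner_linear_left:
  "u \<in> T j \<Longrightarrow> v \<in> T j \<Longrightarrow> w \<in> T j \<Longrightarrow> I (cscale a u + cscale b v) w = a * I u w + b * I v w"
  using inner unfolding ginv_inner_def by blast

lemma inner_act: "g \<in> carrier G \<Longrightarrow> u \<in> T j \<Longrightarrow> v \<in> T j \<Longrightarrow> I (act G H g u) (act G H g v) = I u v"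
  using inner unfolding ginv_inner_def by blast

lemma inner_scale_left: "u \<in> T j \<Longrightarrow> w \<in> T j \<Longrightarrow> I (cscale a u) w = a * I u w"
  using inner_linear_left[of u 0 w a 0] zero_in_T[OF j] by simp

lemma inner_add_left: "u \<in> T j \<Longrightarrow> v \<in> T j \<Longrightarrow> w \<in> T j \<Longrightarrow> I (u + v) w = I u w + I v w"
  using inner_linear_left[of u v w 1 1] by simp

lemma inner_sum_left:
  assumes "finite S" "\<And>i. i \<in> S \<Longrightarrow> u i \<in> T j" "w \<in> T j"
  shows "I (\<Sum>i\<in>S. u i) w = (\<Sum>i\<in>S. I (u i) w)"
  using assms(1,2)
proof (induction S rule: finite_induct)
  case empty
  show ?case
    using inner_scale_left[OF zero_in_T[OF j] assms(3), of 0]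
    by (simp only: sum.empty F.scale_zero_left mult_zero_left)
next
  case (insert x S)
  then have "(\<Sum>i\<in>S. u i) \<in> T j"
    by (intro F.subspace_sum[OF subspace_T[OF j]]) auto
  then have "I (u x + (\<Sum>i\<in>S. u i)) w = I (u x) w + (\<Sum>i\<in>S. I (u i) w)"
    using insert assms(3) inner_add_left[of "u x" "\<Sum>i\<in>S. u i" w] by simp
  then show ?case
    by (simp only: sum.insert[OF insert.hyps(1,2)])
qed

lemma inner_act_left:
  assumes "g \<in> carrier G" "v \<in> T j" "w \<in> T j"
  shows "I (act G H g v) w = I v (act G H (inv g) w)"
proof -
  have "I (act G H g v) w = I (act G H (inv g) (act G H g v)) (act G H (inv g) w)"
    using assms by (simp add: inner_act act_in_T[OF j])
  also have "act G H (inv g) (act G H g v) = v"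
    using assms T_subset_permsp[OF j] by (simp add: act_inv_cancel subsetD)
  finally show ?thesis .
qed

definition translate :: "'a set \<Rightarrow> 'a set \<Rightarrow> complex" where
  "translate x = act G H (rep G H x) \<theta>"

lemma translate_in_T: "x \<in> X \<Longrightarrow> translate x \<in> T j"
  unfolding translate_def using act_in_T[OF j rep_carrier \<theta>_in_T] .

lemma act_\<theta>_lcos_eq:
  assumes "a \<in> carrier G" "b \<in> carrier G" "a <# H = b <# H"
  shows "act G H a \<theta> = act G H b \<theta>"
proof -
  have h: "inv a \<otimes> b \<in> H"
    using lcos_eq_imp_inv_mult_in[OF assms] .
  then have "act G H a (act G H (inv a \<otimes> b) \<theta>) = act G H a \<theta>"
    by (simp add: \<theta>_H_invariant)
  moreover have "a \<otimes> (inv a \<otimes> b) = b"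
    using assms(1,2) by (simp add: m_assoc[symmetric])
  ultimately show ?thesis
    using act_mult[OF assms(1), of "inv a \<otimes> b"] assms(1,2) by simp
qed

lemma act_translate:
  assumes x: "x \<in> X" and g: "g \<in> carrier G"
  shows "act G H g (translate x) = translate (g <# x)"
proof -
  have gx: "g <# x \<in> X"
    using lmult_closed[OF g x] .
  have "(g \<otimes> rep G H x) <# H = g <# x"
    using lcos_m_assoc[OF Hs.subset g rep_carrier[OF x]] rep_lcos[OF x] by simp
  also have "\<dots> = rep G H (g <# x) <# H"
    by (rule rep_lcos[OF gx])
  finally have "act G H (g \<otimes> rep G H x) \<theta> = translate (g <# x)"
    unfolding translate_def using g x gx by (intro act_\<theta>_lcos_eq) (auto intro: rep_carrier)
  then show ?thesis
    using act_mult[OF g rep_carrier[OF x]] by (simp add: translate_def)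
qed

abbreviation \<Psi> :: "'a set \<times> 'a set \<Rightarrow> complex" where
  "\<Psi> \<equiv> Psi G H (T j) I \<theta>"

abbreviation d :: complex where
  "d \<equiv> of_nat (F.dim (T j))"

lemma Psi_eq_inner_translates:
  assumes x: "x \<in> X" and y: "y \<in> X"
  shows "\<Psi> (x, y) = d / of_nat (card X) * I (translate y) (translate x)"
proof -
  let ?rx = "rep G H x" and ?ry = "rep G H y"
  have r: "?rx \<in> carrier G" "?ry \<in> carrier G"
    using rep_carrier x y by auto
  have "I (act G H (inv ?rx \<otimes> ?ry) \<theta>) \<theta>
      = I (act G H ?rx (act G H (inv ?rx \<otimes> ?ry) \<theta>)) (act G H ?rx \<theta>)"
    using r by (simp add: inner_act act_in_T[OF j] \<theta>_in_T)
  also have "act G H ?rx (act G H (inv ?rx \<otimes> ?ry) \<theta>) = act G H ?ry \<theta>"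
    using r by (simp add: act_mult m_assoc[symmetric])
  finally show ?thesis
    by (simp add: Psi_def spherical_def translate_def)
qed

lemma Psi_diag: "x \<in> X \<Longrightarrow> \<Psi> (x, x) = d / of_nat (card X)"
  using Psi_eq_inner_translates[of x x] inner_act[OF rep_carrier \<theta>_in_T \<theta>_in_T] \<theta>_unit
  by (simp add: translate_def)

definition synthesis :: "('a set \<Rightarrow> complex) \<Rightarrow> ('a set \<Rightarrow> complex)" where
  "synthesis f = (\<Sum>z\<in>X. cscale (f z) (translate z))"

definition analysis :: "('a set \<Rightarrow> complex) \<Rightarrow> ('a set \<Rightarrow> complex)" where
  "analysis v = (\<lambda>x. if x \<in> X then I (component j v) (translate x) else 0)"

definition Psi_operator :: "('a set \<Rightarrow> complex) \<Rightarrow> ('a set \<Rightarrow> complex)" where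
  "Psi_operator f = (\<lambda>x. if x \<in> X then \<Sum>y\<in>X. \<Psi> (x, y) * f y else 0)"

lemma synthesis_in_T: "synthesis f \<in> T j"
  unfolding synthesis_def
  by (intro F.subspace_sum[OF subspace_T[OF j]] F.subspace_scale[OF subspace_T[OF j]] translate_in_T)

lemma synthesis_act:
  assumes g: "g \<in> carrier G"
  shows "synthesis (act G H g f) = act G H g (synthesis f)"
proof -
  have "synthesis (act G H g f) = (\<Sum>z\<in>X. cscale (f (inv g <# z)) (translate z))"
    unfolding synthesis_def by (rule sum.cong) (auto simp: act_apply)
  also have "\<dots> = (\<Sum>z\<in>X. cscale (f (inv g <# (g <# z))) (translate (g <# z)))"
    by (rule sum.reindex_bij_betw[OF bij_betw_lmult[OF g], symmetric])
  also have "\<dots> = (\<Sum>z\<in>X. act G H g (cscale (f z) (translate z)))"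
    using g by (intro sum.cong) (simp_all add: lmult_inv_cancel act_translate FF.linear_scale[OF clinear_act])
  also have "\<dots> = act G H g (synthesis f)"
    unfolding synthesis_def by (simp add: FF.linear_sum[OF clinear_act])
  finally show ?thesis .
qed

lemma intertwiner_synthesis: "intertwiner (permsp G H) (T j) synthesis"
proof -
  have "clinear synthesis"
    by (rule clinearI)
      (simp_all add: synthesis_def F.scale_left_distrib sum.distrib F.scale_sum_right)
  then show ?thesis
    using synthesis_in_T synthesis_act by (auto simp: intertwiner_def)
qed

lemma analysis_act:
  assumes g: "g \<in> carrier G" and v: "v \<in> T j"
  shows "analysis (act G H g v) = act G H g (analysis v)"
proof
  fix x
  show "analysis (act G H g v) x = act G H g (analysis v) x"
  proof (cases "x \<in> X")
    case x: True
    have "analysis (act G H g v) x = I (act G H g v) (translate x)"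
      using x component_of_T[OF act_in_T[OF j g v] j j] by (simp add: analysis_def)
    also have "\<dots> = I v (translate (inv g <# x))"
      using g v x by (simp add: inner_act_left translate_in_T act_translate)
    also have "\<dots> = act G H g (analysis v) x"
      using x g v lmult_closed[OF inv_closed[OF g] x] component_of_T[OF v j j]
      by (simp add: analysis_def act_apply)
    finally show ?thesis .
  qed (simp add: analysis_def act_apply)
qed

lemma intertwiner_analysis: "intertwiner (T j) (permsp G H) analysis"
proof -
  have "clinear analysis"
  proof (rule clinearI)
    fix u v :: "'a set \<Rightarrow> complex" and c :: complex
    show "analysis (u + v) = analysis u + analysis v"
      by (auto simp: analysis_def fun_eq_iff FF.linear_add[OF clinear_component[OF j]] inner_add_left
          component_in_T[OF j] translate_in_T)
    show "analysis (cscale c u) = cscale c (analysis u)"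
      by (auto simp: analysis_def fun_eq_iff FF.linear_scale[OF clinear_component[OF j]] inner_scale_left
          component_in_T[OF j] translate_in_T)
  qed
  then show ?thesis
    using analysis_act by (auto simp: intertwiner_def analysis_def permsp_iff)
qed

lemma Psi_operator_eq: "Psi_operator f = cscale (d / of_nat (card X)) (analysis (synthesis f))"
proof
  fix x
  show "Psi_operator f x = cscale (d / of_nat (card X)) (analysis (synthesis f)) x"
  proof (cases "x \<in> X")
    case x: True
    have "analysis (synthesis f) x = I (synthesis f) (translate x)"
      using x component_of_T[OF synthesis_in_T j j] by (simp add: analysis_def)
    also have "\<dots> = (\<Sum>y\<in>X. f y * I (translate y) (translate x))"
      unfolding synthesis_def using x finite_X
      by (simp add: inner_sum_left inner_scale_left translate_in_T F.subspace_scale[OF subspace_T[OF j]])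
    finally show ?thesis
      using x by (simp add: Psi_operator_def Psi_eq_inner_translates sum_distrib_left ac_simps)
  qed (simp add: Psi_operator_def analysis_def)
qed

lemma Psi_operator_delta: "x \<in> X \<Longrightarrow> y \<in> X \<Longrightarrow> Psi_operator (delta y) x = \<Psi> (x, y)"
  using finite_X by (simp add: Psi_operator_def delta_def if_distrib cong: if_cong)

lemma intertwiner_Psi_operator: "intertwiner (T j) (T j) Psi_operator"
proof -
  have lin: "clinear analysis" "clinear synthesis"
    using intertwiner_analysis intertwiner_synthesis by (simp_all add: intertwiner_def)
  have "clinear Psi_operator"
    by (rule clinearI)
      (simp_all only: Psi_operator_eq FF.linear_add[OF lin(1)] FF.linear_add[OF lin(2)]
        FF.linear_scale[OF lin(1)] FF.linear_scale[OF lin(2)] F.scale_right_distrib F.scale_left_commute)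
  moreover have "Psi_operator f \<in> T j" for f
    unfolding Psi_operator_eq
    using intertwiner_maps_into_component[OF j intertwiner_analysis synthesis_in_T]
    by (rule F.subspace_scale[OF subspace_T[OF j]])
  moreover have "Psi_operator (act G H g f) = act G H g (Psi_operator f)" if "g \<in> carrier G" for g f
    by (simp only: Psi_operator_eq synthesis_act[OF that] analysis_act[OF that synthesis_in_T]
        FF.linear_scale[OF clinear_act])
  ultimately show ?thesis
    by (auto simp: intertwiner_def)
qed

lemma Psi_operator_eq_component:
  assumes f: "f \<in> permsp G H"
  shows "Psi_operator f = component j f"
proof -
  obtain c where c: "\<forall>f\<in>T j. Psi_operator f = cscale c f"
    using intertwiner_irred_scalar[OF _ intertwiner_Psi_operator] irreducible j by blast
  have scalar: "Psi_operator f = cscale c (component j f)" if "f \<in> permsp G H" for f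
  proof -
    have "Psi_operator f = Psi_operator (component j f)"
      unfolding Psi_operator_eq
      using intertwiner_factors_through_component[OF j intertwiner_synthesis that] by simp
    then show ?thesis
      using c component_in_T[OF j] by simp
  qed
  txt \<open>Compare the traces of \<open>Psi_operator\<close> and of the projection onto \<open>T j\<close>.\<close>
  have "(\<Sum>x\<in>X. Psi_operator (delta x) x) = c * d"
    using scalar delta_in_permsp sum_diag_projection_eq_dim[OF T_subset_permsp[OF j] clinear_component[OF j]]
      component_in_T[OF j] component_of_T[OF _ j j]
    by (simp add: sum_distrib_left[symmetric] image_subset_iff)
  moreover have "(\<Sum>x\<in>X. Psi_operator (delta x) x) = d"
    using card_X_neq_0 by (simp add: Psi_operator_delta Psi_diag)
  moreover have "d \<noteq> 0"
  proof -
    have "\<exists>w\<in>T j. w \<noteq> 0"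
      using T_neq_zero[OF j] zero_in_T[OF j] by auto
    then show ?thesis
      using dim_neq_0[OF T_subset_permsp[OF j]] by auto
  qed
  ultimately have "c = 1"
    by simp
  then show ?thesis
    using scalar[OF f] by simp
qed

lemma Psi_eq_component: "x \<in> X \<Longrightarrow> y \<in> X \<Longrightarrow> \<Psi> (x, y) = component j (delta y) x"
  using Psi_operator_eq_component[OF delta_in_permsp] Psi_operator_delta by simp

end

section \<open>Row and column sums\<close>

lemma sum_inner_XX_left: "(\<Sum>i\<in>A. inner_XX G H (a i) b) = inner_XX G H (\<lambda>p. \<Sum>i\<in>A. a i p) b"
  unfolding inner_XX_def by (simp add: sum_distrib_right sum.swap[of _ A])

lemma sum_inner_XX_right: "(\<Sum>i\<in>A. inner_XX G H a (b i)) = inner_XX G H a (\<lambda>p. \<Sum>i\<in>A. b i p)"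
  unfolding inner_XX_def by (simp add: sum_distrib_left sum.swap[of _ A])

locale spherical_system = multiplicity_free_decomposition +
  fixes ip :: "nat \<Rightarrow> ('a set \<Rightarrow> complex) \<Rightarrow> ('a set \<Rightarrow> complex) \<Rightarrow> complex"
    and \<theta> :: "nat \<Rightarrow> 'a set \<Rightarrow> complex"
  assumes m_pos: "1 \<le> m" and T1_constants: "T 1 = constants G H"
    and inner: "\<forall>j\<in>{1..m}. ginv_inner G H (T j) (ip j)"
    and spherical: "\<forall>j\<in>{1..m}. \<theta> j \<in> T j \<and> (\<forall>h\<in>H. act G H h (\<theta> j) = \<theta> j) \<and> ip j (\<theta> j) (\<theta> j) = 1"
begin

lemma Psi_eq_component:
  assumes j: "j \<in> {1..m}" and "x \<in> X" "y \<in> X"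
  shows "Psi G H (T j) (ip j) (\<theta> j) (x, y) = component j (delta y) x"
proof -
  interpret spherical_vector G H m T j "ip j" "\<theta> j"
    by (intro spherical_vector.intro multiplicity_free_decomposition_axioms spherical_vector_axioms.intro)
      (use j inner spherical in auto)
  show ?thesis
    using Psi_eq_component assms(2,3) .
qed

lemma sum_Psi_over_components:
  assumes "x \<in> X" "y \<in> X"
  shows "(\<Sum>j\<in>{1..m}. Psi G H (T j) (ip j) (\<theta> j) (x, y)) = (if x = y then 1 else 0)"
proof -
  have "(\<Sum>j\<in>{1..m}. Psi G H (T j) (ip j) (\<theta> j) (x, y)) = (\<Sum>j\<in>{1..m}. component j (delta y)) x"
    using assms by (simp add: Psi_eq_component sum_fun_apply)
  also have "\<dots> = delta y x"
    using sum_components[OF delta_in_permsp[OF assms(2)]] by simp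
  finally show ?thesis
    by (simp add: delta_def)
qed

lemma sum_Psi_over_X:
  assumes j: "j \<in> {1..m}" and x: "x \<in> X"
  shows "(\<Sum>y\<in>X. Psi G H (T j) (ip j) (\<theta> j) (x, y)) = (if j = 1 then 1 else 0)"
proof -
  define one where "one = (\<lambda>x. if x \<in> X then 1 else 0 :: complex)"
  have "one \<in> T 1"
    unfolding T1_constants constants_def one_def by (auto simp: permsp_iff)
  have "(\<Sum>y\<in>X. delta y) = one"
    using finite_X by (auto simp: fun_eq_iff sum_fun_apply delta_def one_def)
  have "(\<Sum>y\<in>X. Psi G H (T j) (ip j) (\<theta> j) (x, y)) = (\<Sum>y\<in>X. component j (delta y)) x"
    using j x by (simp add: Psi_eq_component sum_fun_apply)
  also have "\<dots> = component j one x"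
    using \<open>(\<Sum>y\<in>X. delta y) = one\<close> FF.linear_sum[OF clinear_component[OF j], of delta X] by simp
  also have "\<dots> = (if j = 1 then 1 else 0)"
    using component_of_T[OF \<open>one \<in> T 1\<close> _ j] m_pos x by (simp add: one_def)
  finally show ?thesis .
qed

lemma sum_orbits_inner_Psi:
  fixes Orb :: "nat \<Rightarrow> ('a set \<times> 'a set) set"
  assumes Orb: "bij_betw Orb {1..k} (orbits_XX G H)" and j: "j \<in> {1..m}"
  shows "(\<Sum>i\<in>{1..k}. inner_XX G H (charfun (Orb i)) (Psi G H (T j) (ip j) (\<theta> j))) = (if j = 1 then of_nat (card X) else 0)"
proof -
  have "(\<Sum>i\<in>{1..k}. inner_XX G H (charfun (Orb i)) (Psi G H (T j) (ip j) (\<theta> j))) = (\<Sum>x\<in>X. \<Sum>y\<in>X. cnj (Psi G H (T j) (ip j) (\<theta> j) (x, y)))"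
    unfolding sum_inner_XX_left unfolding inner_XX_def using sum_charfun_orbits[OF Orb] by simp
  also have "\<dots> = (\<Sum>x\<in>X. if j = 1 then 1 else 0)"
    using j by (simp add: sum_Psi_over_X flip: cnj_sum)
  finally show ?thesis
    by simp
qed

lemma sum_components_inner_Psi:
  fixes Orb :: "nat \<Rightarrow> ('a set \<times> 'a set) set"
  assumes Orb: "bij_betw Orb {1..k} (orbits_XX G H)" and Orb1: "Orb 1 = diag_XX G H"
    and i: "i \<in> {1..k}"
  shows "(\<Sum>j\<in>{1..m}. inner_XX G H (charfun (Orb i)) (Psi G H (T j) (ip j) (\<theta> j))) = (if i = 1 then of_nat (card X) else 0)"
proof -
  have "(\<Sum>j\<in>{1..m}. inner_XX G H (charfun (Orb i)) (Psi G H (T j) (ip j) (\<theta> j)))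
      = (\<Sum>x\<in>X. \<Sum>y\<in>X. if y = x then charfun (Orb i) (x, x) else 0)"
    unfolding sum_inner_XX_right unfolding inner_XX_def
    by (intro sum.cong refl) (simp only: sum_Psi_over_components, simp)
  also have "\<dots> = (\<Sum>x\<in>X. if i = 1 then 1 else 0)"
    using finite_X by (simp add: charfun_orbit_diag[OF Orb Orb1 i])
  finally show ?thesis
    by simp
qed

end

theorem mainTheorem8:
  fixes G :: "('a, 'b) monoid_scheme" and H :: "'a set"
    and m :: nat and T :: "nat \<Rightarrow> ('a set \<Rightarrow> complex) set"
    and ip :: "nat \<Rightarrow> ('a set \<Rightarrow> complex) \<Rightarrow> ('a set \<Rightarrow> complex) \<Rightarrow> complex"
    and \<theta> :: "nat \<Rightarrow> 'a set \<Rightarrow> complex"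
    and k :: nat and Orb :: "nat \<Rightarrow> ('a set \<times> 'a set) set"
  assumes "group G" and "finite (carrier G)" and "subgroup H G"
    and "gelfand_pair G H"
    and "direct_sum_decomp G H m T"
    and "\<forall>j\<in>{1..m}. irred_subrep G H (T j)"
    and "\<forall>i\<in>{1..m}. \<forall>j\<in>{1..m}. i \<noteq> j \<longrightarrow> \<not> iso_subreps G H (T i) (T j)"
    and "1 \<le> m" and "T 1 = constants G H"
    and "\<forall>j\<in>{1..m}. ginv_inner G H (T j) (ip j)"
    and "\<forall>j\<in>{1..m}. \<theta> j \<in> T j \<and> (\<forall>h\<in>H. act G H h (\<theta> j) = \<theta> j) \<and> ip j (\<theta> j) (\<theta> j) = 1"
    and "bij_betw Orb {1..k} (orbits_XX G H)" and "Orb 1 = diag_XX G H"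
  shows "(\<forall>j\<in>{1..m}. (\<Sum>i\<in>{1..k}. inner_XX G H (charfun (Orb i)) (Psi G H (T j) (ip j) (\<theta> j)))
            = (if j = 1 then of_nat (card (lcosets\<^bsub>G\<^esub> H)) else 0))
       \<and> (\<forall>i\<in>{1..k}. (\<Sum>j\<in>{1..m}. inner_XX G H (charfun (Orb i)) (Psi G H (T j) (ip j) (\<theta> j)))
            = (if i = 1 then of_nat (card (lcosets\<^bsub>G\<^esub> H)) else 0))"
proof -
  have "spherical_system G H m T ip \<theta>"
    unfolding spherical_system_def spherical_system_axioms_def multiplicity_free_decomposition_def
      multiplicity_free_decomposition_axioms_def finite_coset_space_def
    using assms by blast
  then interpret spherical_system G H m T ip \<theta> .
  show ?thesis
    using sum_orbits_inner_Psi sum_components_inner_Psi assms(12,13) by blast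
qed

end
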